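(* Let $n, m, k, l, s, t, i$ be positive integers with $\min\{m,n\}\geq (t+1)(k-t+1)$, $k\geq l> t\geq 3$, $i+2\leq s \leq i+k-t$ and $t+2 \leq i\leq k$. Then \[\frac{(m-l+t-i)(n-s-k+i)\,S(n,s,i,k)\,S(m,s,s+t-i,l)}{(m-s+1)(n-s+1)\,T(n,s,i,k)\,T(m,s,s+t-i,l)}>1,\] where for positive integers $n,s,i,j$, \[S(n,s,i,j)=s(n-s+1)-i(j-i),\qquad T(n,s,i,j)=i(n-j-s+i+1)+(s-i)(j-i+1).\] *)

theory Defs
  imports Complex_Main
begin

definition S :: "int \<Rightarrow> int \<Rightarrow> int \<Rightarrow> int \<Rightarrow> int" where
  "S n s i j = s * (n - s + 1) - i * (j - i)"

definition T :: "int \<Rightarrow> int \<Rightarrow> int \<Rightarrow> int \<Rightarrow> int" where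
  "T n s i j = i * (n - j - s + i + 1) + (s - i) * (j - i + 1)"

end

theory Submission
  imports Defs
begin

text \<open>
  With \<open>a = n - s - k + i\<close>, \<open>p = s - i\<close> and \<open>q = k - i + 1\<close> one has
  \<open>S n s i k = T n s i k + p * a\<close>, so the quotient splits into two factors of the form
  \<open>a / (a + q) * (s * a + i + p * q) / (i * a + i + p * q)\<close>, the second one obtained by
  replacing \<open>(n, i, k)\<close> with \<open>(m, s + t - i, l)\<close>. Both fractions are linear fractional in
  \<open>a\<close> and in \<open>q\<close>, so each factor increases with \<open>a\<close> and decreases with \<open>q\<close>: the product
  is smallest for \<open>n = m = (t + 1) * (k - t + 1)\<close> and \<open>l = k\<close>. There it only depends on
  \<open>t\<close>, \<open>u = i - t\<close>, \<open>p\<close> and \<open>K = k - t + 1\<close> and is symmetric in \<open>u\<close> and \<open>p\<close>. The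
  remaining inequality is tight (for \<open>t = 3\<close>, \<open>u = p = 2\<close> the product tends to
  \<open>(69/68)\<^sup>2\<close> as \<open>K\<close> grows), so it is settled by an exact certificate: after the
  substitution \<open>t = x1 + 3\<close>, \<open>u = x2 + 2\<close>, \<open>p = u + x3\<close>, \<open>K = p + x4 + 1\<close> the
  cross-multiplied difference is a polynomial with positive coefficients.
\<close>

lemma linear_fraction_mono:
  fixes a b c d x y :: int
  assumes "0 < c * x + d" "0 \<le> c" "x \<le> y" "b * c \<le> a * d"
  shows "real_of_int (a * x + b) / real_of_int (c * x + d)
    \<le> real_of_int (a * y + b) / real_of_int (c * y + d)"
proof -
  have "c * x \<le> c * y"
    using assms(2,3) by (simp add: mult_left_mono)
  then have pos: "0 < c * y + d"
    using assms(1) by linarith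
  have "(a * y + b) * (c * x + d) - (a * x + b) * (c * y + d) = (a * d - b * c) * (y - x)"
    by (simp add: algebra_simps)
  also have "\<dots> \<ge> 0"
    using assms(3,4) by simp
  finally have "(a * x + b) * (c * y + d) \<le> (a * y + b) * (c * x + d)"
    by simp
  then have "real_of_int ((a * x + b) * (c * y + d)) \<le> real_of_int ((a * y + b) * (c * x + d))"
    by (simp only: of_int_le_iff)
  moreover have "0 < real_of_int (c * x + d)" "0 < real_of_int (c * y + d)"
    using assms(1) pos by (simp_all only: of_int_0_less_iff)
  ultimately show ?thesis
    by (simp add: divide_simps)
qed

lemma linear_fraction_antimono:
  fixes a b c d x y :: int
  assumes "0 < c * x + d" "0 \<le> c" "x \<le> y" "a * d \<le> b * c"
  shows "real_of_int (a * y + b) / real_of_int (c * y + d)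
    \<le> real_of_int (a * x + b) / real_of_int (c * x + d)"
proof -
  have "real_of_int (- a * x + - b) / real_of_int (c * x + d)
      \<le> real_of_int (- a * y + - b) / real_of_int (c * y + d)"
    by (rule linear_fraction_mono) (use assms in auto)
  then show ?thesis
    by (simp only: mult_minus_left minus_add_distrib[symmetric] of_int_minus
        minus_divide_left neg_le_iff_le)
qed

definition ratio_factor :: "int \<Rightarrow> int \<Rightarrow> int \<Rightarrow> int \<Rightarrow> real" where
  "ratio_factor a i p q =
     real_of_int a / real_of_int (a + q)
     * (real_of_int ((i + p) * a + i + p * q) / real_of_int (i * a + i + p * q))"

lemma ratio_factor_nonneg:
  assumes "0 \<le> a" "0 \<le> q" "0 < i" "0 \<le> p"
  shows "0 \<le> ratio_factor a i p q"
  unfolding ratio_factor_def using assms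
  by (intro mult_nonneg_nonneg divide_nonneg_nonneg) (simp_all add: add_nonneg_nonneg)

lemma ratio_factor_mono:
  assumes "0 < a" "a \<le> a'" "0 \<le> q" "0 < i" "0 \<le> p"
  shows "ratio_factor a i p q \<le> ratio_factor a' i p q"
proof -
  have "0 < i * a" "0 \<le> p * q"
    using assms by simp_all
  then have c_pos: "0 < i + p * q" and T_pos: "0 < i * a + i + p * q"
    using assms by linarith+
  have "real_of_int (1 * a + 0) / real_of_int (1 * a + q)
      \<le> real_of_int (1 * a' + 0) / real_of_int (1 * a' + q)"
    by (rule linear_fraction_mono) (use assms in auto)
  moreover have "real_of_int ((i + p) * a + (i + p * q)) / real_of_int (i * a + (i + p * q))
      \<le> real_of_int ((i + p) * a' + (i + p * q)) / real_of_int (i * a' + (i + p * q))"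
    by (rule linear_fraction_mono) (use assms c_pos T_pos in \<open>auto simp: algebra_simps\<close>)
  moreover have "0 \<le> real_of_int ((i + p) * a + i + p * q) / real_of_int (i * a + i + p * q)"
    using assms c_pos T_pos by simp
  moreover have "0 \<le> real_of_int a' / real_of_int (a' + q)"
    using assms by simp
  ultimately show ?thesis
    unfolding ratio_factor_def by (intro mult_mono) (simp_all add: add.assoc)
qed

lemma ratio_factor_antimono:
  assumes "0 < a" "q \<le> q'" "0 < a + q" "0 < i * a + i + p * q" "0 \<le> p"
  shows "ratio_factor a i p q' \<le> ratio_factor a i p q"
proof -
  have "p * q \<le> p * q'" "0 \<le> p * a"
    using assms by (simp_all add: mult_left_mono)
  moreover have "(i + p) * a + i + p * q' = (i * a + i + p * q') + p * a"
    by (simp add: algebra_simps)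
  ultimately have T_pos: "0 < i * a + i + p * q'" and S_pos: "0 < (i + p) * a + i + p * q'"
    using assms(4) by linarith+
  have "real_of_int (0 * q' + a) / real_of_int (1 * q' + a)
      \<le> real_of_int (0 * q + a) / real_of_int (1 * q + a)"
    by (rule linear_fraction_antimono) (use assms in auto)
  moreover have "real_of_int (p * q' + ((i + p) * a + i)) / real_of_int (p * q' + (i * a + i))
      \<le> real_of_int (p * q + ((i + p) * a + i)) / real_of_int (p * q + (i * a + i))"
    by (rule linear_fraction_antimono) (use assms in \<open>auto simp: algebra_simps\<close>)
  moreover have "0 \<le> real_of_int ((i + p) * a + i + p * q') / real_of_int (i * a + i + p * q')"
    using T_pos S_pos by (intro divide_nonneg_pos) (simp_all only: of_int_0_less_iff less_imp_le)
  moreover have "0 \<le> real_of_int a / real_of_int (a + q)"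
    using assms by simp
  ultimately show ?thesis
    unfolding ratio_factor_def by (intro mult_mono) (simp_all add: ac_simps)
qed

lemma ratio_factor_le:
  assumes "0 < a" "a \<le> a'" "q \<le> q'" "0 \<le> q'" "0 < i" "0 \<le> p"
    and "0 < a' + q" "0 < i * a' + i + p * q"
  shows "ratio_factor a i p q' \<le> ratio_factor a' i p q"
proof -
  have "ratio_factor a i p q' \<le> ratio_factor a' i p q'"
    using assms by (intro ratio_factor_mono) auto
  also have "\<dots> \<le> ratio_factor a' i p q"
    using assms by (intro ratio_factor_antimono) auto
  finally show ?thesis .
qed

lemma S_T_ratio_eq_ratio_factor:
  assumes "a = n - s - j + i"
  shows "real_of_int (a * S n s i j) / real_of_int ((n - s + 1) * T n s i j)
    = ratio_factor a i (s - i) (j - i + 1)"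
proof -
  have "S n s i j = (i + (s - i)) * a + i + (s - i) * (j - i + 1)"
    "T n s i j = i * a + i + (s - i) * (j - i + 1)"
    "n - s + 1 = a + (j - i + 1)"
    unfolding assms by (simp_all add: S_def T_def algebra_simps)
  then show ?thesis
    unfolding ratio_factor_def by (simp only: of_int_mult times_divide_times_eq)
qed

lemma S_T_product_ratio_eq:
  "real_of_int ((m - l + t - i) * (n - s - k + i) * S n s i k * S m s (s + t - i) l)
     / real_of_int ((m - s + 1) * (n - s + 1) * T n s i k * T m s (s + t - i) l)
   = ratio_factor (n - s - k + i) i (s - i) (k - i + 1)
     * ratio_factor (m - l + t - i) (s + t - i) (i - t) (l - (s + t - i) + 1)"
proof -
  have "m - l + t - i = m - s - l + (s + t - i)" "i - t = s - (s + t - i)"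
    by simp_all
  then have "ratio_factor (m - l + t - i) (s + t - i) (i - t) (l - (s + t - i) + 1)
    = real_of_int ((m - l + t - i) * S m s (s + t - i) l)
      / real_of_int ((m - s + 1) * T m s (s + t - i) l)"
    using S_T_ratio_eq_ratio_factor by metis
  moreover have "ratio_factor (n - s - k + i) i (s - i) (k - i + 1)
    = real_of_int ((n - s - k + i) * S n s i k) / real_of_int ((n - s + 1) * T n s i k)"
    by (rule S_T_ratio_eq_ratio_factor[symmetric]) (rule refl)
  ultimately show ?thesis
    by (simp only: of_int_mult times_divide_times_eq mult_ac)
qed

text \<open>The value of the product at \<open>n = m = (t + 1) * K\<close>, \<open>l = k\<close>, where \<open>K = k - t + 1\<close>,
  \<open>u = i - t\<close> and \<open>p = s - i\<close>.\<close>

definition extremal_product :: "int \<Rightarrow> int \<Rightarrow> int \<Rightarrow> int \<Rightarrow> real" where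
  "extremal_product t u p K =
     ratio_factor (t * K - t + 1 - p) (t + u) p (K - u)
     * ratio_factor (t * K - t + 1 - u) (t + p) u (K - p)"

lemma extremal_product_commute: "extremal_product t u p K = extremal_product t p u K"
  unfolding extremal_product_def by (rule mult.commute)

lemma extremal_cross_multiplied:
  fixes x1 x2 x3 x4 :: nat and t u p K :: int
  assumes "t = int x1 + 3" "u = int x2 + 2" "p = int x2 + int x3 + 2"
    "K = int x2 + int x3 + int x4 + 3"
  defines "a \<equiv> t * K - t + 1 - p" and "b \<equiv> t * K - t + 1 - u"
  shows "(a + (K - u)) * ((t + u) * a + (t + u) + p * (K - u))
           * ((b + (K - p)) * ((t + p) * b + (t + p) + u * (K - p)))
         < a * ((t + u + p) * a + (t + u) + p * (K - u))
           * (b * ((t + p + u) * b + (t + p) + u * (K - p)))"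
    (is "?D < ?N")
proof -
  have excess: "?N - ?D = int (7236 + (15840 * x1 + 26136 * x2 + 19518 * x3 + 12900 * x4
      + 50844 * x1 * x2 + 40370 * x1 * x3 + 29896 * x1 * x4 + 12360 * x1^2 + 53408 * x2 * x3
      + 45184 * x2 * x4 + 30816 * x2^2 + 30641 * x3 * x4 + 20364 * x3^2 + 8049 * x4^2
      + 102043 * x1 * x2 * x3 + 86878 * x1 * x2 * x4 + 58604 * x1 * x2^2 + 64071 * x1 * x3 * x4
      + 41063 * x1 * x3^2 + 20632 * x1 * x4^2 + 37588 * x1^2 * x2 + 30554 * x1^2 * x3
      + 23520 * x1^2 * x4 + 4464 * x1^3 + 72850 * x2 * x3 * x4 + 41677 * x2 * x3^2
      + 28310 * x2 * x4^2 + 48322 * x2^2 * x3 + 44540 * x2^2 * x4 + 17368 * x2^3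
      + 17122 * x3 * x4^2 + 25991 * x3^2 * x4 + 10785 * x3^3 + 1978 * x4^3
      + 136044 * x1 * x2 * x3 * x4 + 78962 * x1 * x2 * x3^2 + 53934 * x1 * x2 * x4^2
      + 90825 * x1 * x2^2 * x3 + 82110 * x1 * x2^2 * x4 + 33180 * x1 * x2^3
      + 36150 * x1 * x3 * x4^2 + 51721 * x1 * x3^2 * x4 + 21505 * x1 * x3^3 + 6122 * x1 * x4^3
      + 74302 * x1^2 * x2 * x3 + 62746 * x1^2 * x2 * x4 + 42929 * x1^2 * x2^2
      + 47907 * x1^2 * x3 * x4 + 30487 * x1^2 * x3^2 + 16534 * x1^2 * x4^2 + 13212 * x1^3 * x2
      + 10814 * x1^3 * x3 + 8416 * x1^3 * x4 + 756 * x1^4 + 33285 * x2 * x3 * x4^2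
      + 41411 * x2 * x3^2 * x4 + 15656 * x2 * x3^3 + 7568 * x2 * x4^3 + 50637 * x2^2 * x3 * x4
      + 27325 * x2^2 * x3^2 + 21933 * x2^2 * x4^2 + 19896 * x2^3 * x3 + 19136 * x2^3 * x4
      + 5164 * x2^4 + 4058 * x3 * x4^3 + 11127 * x3^2 * x4^2 + 10269 * x3^3 * x4 + 3099 * x3^4
      + 137 * x4^4
      + 60536 * x1 * x2 * x3 * x4^2 + 75926 * x1 * x2 * x3^2 * x4 + 29497 * x1 * x2 * x3^3
      + 14328 * x1 * x2 * x4^3 + 91508 * x1 * x2^2 * x3 * x4 + 50874 * x1 * x2^2 * x3^2
      + 39044 * x1 * x2^2 * x4^2 + 37496 * x1 * x2^3 * x3 + 34976 * x1 * x2^3 * x4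
      + 10004 * x1 * x2^4 + 8464 * x1 * x3 * x4^3 + 21559 * x1 * x3^2 * x4^2
      + 19860 * x1 * x3^3 * x4 + 6145 * x1 * x3^4 + 650 * x1 * x4^4
      + 95894 * x1^2 * x2 * x3 * x4 + 56782 * x1^2 * x2 * x3^2 + 37978 * x1^2 * x2 * x4^2
      + 65612 * x1^2 * x2^2 * x3 + 57916 * x1^2 * x2^2 * x4 + 24436 * x1^2 * x2^3
      + 26597 * x1^2 * x3 * x4^2 + 37347 * x1^2 * x3^2 * x4 + 15714 * x1^2 * x3^3
      + 5072 * x1^2 * x4^3 + 25721 * x1^3 * x2 * x3 + 21414 * x1^3 * x2 * x4
      + 15014 * x1^3 * x2^2 + 16591 * x1^3 * x3 * x4 + 10593 * x1^3 * x3^2 + 5884 * x1^3 * x4^2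
      + 2196 * x1^4 * x2 + 1800 * x1^4 * x3 + 1404 * x1^4 * x4 + 48 * x1^5
      + 5502 * x2 * x3 * x4^3 + 11868 * x2 * x3^2 * x4^2 + 9908 * x2 * x3^3 * x4
      + 2841 * x2 * x3^4 + 722 * x2 * x4^4 + 15609 * x2^2 * x3 * x4^2 + 18179 * x2^2 * x3^2 * x4
      + 6622 * x2^2 * x3^3 + 4058 * x2^2 * x4^3 + 13964 * x2^3 * x3 * x4 + 7320 * x2^3 * x3^2
      + 6348 * x2^3 * x4^2 + 3864 * x2^4 * x3 + 3808 * x2^4 * x4 + 784 * x2^5 + 361 * x3 * x4^4
      + 1759 * x3^2 * x4^3 + 2859 * x3^3 * x4^2 + 1920 * x3^4 * x4 + 459 * x3^5
      + 9644 * x1 * x2 * x3 * x4^3 + 20834 * x1 * x2 * x3^2 * x4^2 + 17844 * x1 * x2 * x3^3 * x4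
      + 5312 * x1 * x2 * x3^4 + 1364 * x1 * x2 * x4^4 + 26829 * x1 * x2^2 * x3 * x4^2
      + 32171 * x1 * x2^2 * x3^2 * x4 + 12175 * x1 * x2^2 * x3^3 + 6916 * x1 * x2^2 * x4^3
      + 24906 * x1 * x2^3 * x3 * x4 + 13572 * x1 * x2^3 * x3^2 + 10970 * x1 * x2^3 * x4^2
      + 7344 * x1 * x2^4 * x3 + 6968 * x1 * x2^4 * x4 + 1544 * x1 * x2^5 + 682 * x1 * x3 * x4^4
      + 3209 * x1 * x3^2 * x4^3 + 5255 * x1 * x3^3 * x4^2 + 3637 * x1 * x3^4 * x4
      + 909 * x1 * x3^5 + 41020 * x1^2 * x2 * x3 * x4^2 + 52254 * x1^2 * x2 * x3^2 * x4
      + 20879 * x1^2 * x2 * x3^3 + 9792 * x1^2 * x2 * x4^3 + 63022 * x1^2 * x2^2 * x3 * x4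
      + 36146 * x1^2 * x2^2 * x3^2 + 26332 * x1^2 * x2^2 * x4^2 + 27100 * x1^2 * x2^3 * x3
      + 24460 * x1^2 * x2^3 * x4 + 7435 * x1^2 * x2^4 + 6036 * x1^2 * x3 * x4^3
      + 14956 * x1^2 * x3^2 * x4^2 + 13888 * x1^2 * x3^3 * x4 + 4404 * x1^2 * x3^4
      + 570 * x1^2 * x4^4 + 31938 * x1^3 * x2 * x3 * x4 + 19293 * x1^3 * x2 * x3^2
      + 12544 * x1^3 * x2 * x4^2 + 22522 * x1^3 * x2^2 * x3 + 19394 * x1^3 * x2^2 * x4
      + 8550 * x1^3 * x2^3 + 8978 * x1^3 * x3 * x4^2 + 12531 * x1^3 * x3^2 * x4
      + 5339 * x1^3 * x3^3 + 1804 * x1^3 * x4^3 + 4194 * x1^4 * x2 * x3 + 3450 * x1^4 * x2 * x4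
      + 2469 * x1^4 * x2^2 + 2694 * x1^4 * x3 * x4 + 1725 * x1^4 * x3^2 + 969 * x1^4 * x4^2
      + 136 * x1^5 * x2 + 112 * x1^5 * x3 + 88 * x1^5 * x4 + 185 * x2 * x3 * x4^4
      + 822 * x2 * x3^2 * x4^3 + 1276 * x2 * x3^3 * x4^2 + 837 * x2 * x3^4 * x4
      + 198 * x2 * x3^5 + 1240 * x2^2 * x3 * x4^3 + 2531 * x2^2 * x3^2 * x4^2
      + 2052 * x2^2 * x3^3 * x4 + 579 * x2^2 * x3^4 + 185 * x2^2 * x4^4
      + 2126 * x2^3 * x3 * x4^2 + 2410 * x2^3 * x3^2 * x4 + 864 * x2^3 * x3^3
      + 580 * x2^3 * x4^3 + 1348 * x2^4 * x3 * x4 + 696 * x2^4 * x3^2 + 628 * x2^4 * x4^2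
      + 288 * x2^5 * x3 + 288 * x2^5 * x4 + 48 * x2^6 + 60 * x3^2 * x4^4 + 201 * x3^3 * x4^3
      + 249 * x3^4 * x4^2 + 135 * x3^5 * x4 + 27 * x3^6
      + 290 * x1 * x2 * x3 * x4^4 + 1327 * x1 * x2 * x3^2 * x4^3 + 2141 * x1 * x2 * x3^3 * x4^2
      + 1470 * x1 * x2 * x3^4 * x4 + 366 * x1 * x2 * x3^5 + 1957 * x1 * x2^2 * x3 * x4^3
      + 4146 * x1 * x2^2 * x3^2 * x4^2 + 3517 * x1 * x2^2 * x3^3 * x4 + 1042 * x1 * x2^2 * x3^4
      + 290 * x1 * x2^2 * x4^4 + 3497 * x1 * x2^3 * x3 * x4^2 + 4151 * x1 * x2^3 * x3^2 * x4
      + 1562 * x1 * x2^3 * x3^3 + 918 * x1 * x2^3 * x4^3 + 2380 * x1 * x2^4 * x3 * x4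
      + 1288 * x1 * x2^4 * x3^2 + 1060 * x1 * x2^4 * x4^2 + 552 * x1 * x2^5 * x3
      + 528 * x1 * x2^5 * x4 + 96 * x1 * x2^6 + 95 * x1 * x3^2 * x4^4 + 334 * x1 * x3^3 * x4^3
      + 437 * x1 * x3^4 * x4^2 + 252 * x1 * x3^5 * x4 + 54 * x1 * x3^6
      + 6174 * x1^2 * x2 * x3 * x4^3 + 13487 * x1^2 * x2 * x3^2 * x4^2
      + 11867 * x1^2 * x2 * x3^3 * x4 + 3663 * x1^2 * x2 * x3^4 + 896 * x1^2 * x2 * x4^4
      + 17316 * x1^2 * x2^2 * x3 * x4^2 + 21424 * x1^2 * x2^2 * x3^2 * x4
      + 8426 * x1^2 * x2^2 * x3^3 + 4382 * x1^2 * x2^2 * x4^3 + 16826 * x1^2 * x2^3 * x3 * x4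
      + 9546 * x1^2 * x2^3 * x3^2 + 7162 * x1^2 * x2^3 * x4^2 + 5306 * x1^2 * x2^4 * x3
      + 4832 * x1^2 * x2^4 * x4 + 1156 * x1^2 * x2^5 + 448 * x1^2 * x3 * x4^4
      + 2077 * x1^2 * x3^2 * x4^3 + 3438 * x1^2 * x3^3 * x4^2 + 2442 * x1^2 * x3^4 * x4
      + 633 * x1^2 * x3^5 + 13027 * x1^3 * x2 * x3 * x4^2 + 16834 * x1^3 * x2 * x3^2 * x4
      + 6890 * x1^3 * x2 * x3^3 + 3110 * x1^3 * x2 * x4^3 + 20437 * x1^3 * x2^2 * x3 * x4
      + 12063 * x1^3 * x2^2 * x3^2 + 8362 * x1^3 * x2^2 * x4^2 + 9213 * x1^3 * x2^3 * x3
      + 8050 * x1^3 * x2^3 * x4 + 2594 * x1^3 * x2^4 + 1963 * x1^3 * x3 * x4^3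
      + 4787 * x1^3 * x3^2 * x4^2 + 4474 * x1^3 * x3^3 * x4 + 1446 * x1^3 * x3^4
      + 204 * x1^3 * x4^4 + 4994 * x1^4 * x2 * x3 * x4 + 3054 * x1^4 * x2 * x3^2
      + 1952 * x1^4 * x2 * x4^2 + 3597 * x1^4 * x2^2 * x3 + 3042 * x1^4 * x2^2 * x4
      + 1384 * x1^4 * x2^3 + 1417 * x1^4 * x3 * x4^2 + 1964 * x1^4 * x3^2 * x4
      + 841 * x1^4 * x3^3 + 294 * x1^4 * x4^3 + 252 * x1^5 * x2 * x3 + 208 * x1^5 * x2 * x4
      + 148 * x1^5 * x2^2 + 164 * x1^5 * x3 * x4 + 104 * x1^5 * x3^2 + 60 * x1^5 * x4^2
      + 157 * x1^2 * x2 * x3 * x4^4 + 753 * x1^2 * x2 * x3^2 * x4^3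
      + 1274 * x1^2 * x2 * x3^3 * x4^2 + 919 * x1^2 * x2 * x3^4 * x4 + 241 * x1^2 * x2 * x3^5
      + 1109 * x1^2 * x2^2 * x3 * x4^3 + 2469 * x1^2 * x2^2 * x3^2 * x4^2
      + 2204 * x1^2 * x2^2 * x3^3 * x4 + 688 * x1^2 * x2^2 * x3^4 + 157 * x1^2 * x2^2 * x4^4
      + 2117 * x1^2 * x2^3 * x3 * x4^2 + 2645 * x1^2 * x2^3 * x3^2 * x4
      + 1049 * x1^2 * x2^3 * x3^3 + 530 * x1^2 * x2^3 * x4^3 + 1561 * x1^2 * x2^4 * x3 * x4
      + 890 * x1^2 * x2^4 * x3^2 + 661 * x1^2 * x2^4 * x4^2 + 396 * x1^2 * x2^5 * x3
      + 360 * x1^2 * x2^5 * x4 + 72 * x1^2 * x2^6 + 52 * x1^2 * x3^2 * x4^4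
      + 191 * x1^2 * x3^3 * x4^3 + 262 * x1^2 * x3^4 * x4^2 + 159 * x1^2 * x3^5 * x4
      + 36 * x1^2 * x3^6 + 1826 * x1^3 * x2 * x3 * x4^3 + 4015 * x1^3 * x2 * x3^2 * x4^2
      + 3606 * x1^3 * x2 * x3^3 * x4 + 1147 * x1^3 * x2 * x3^4 + 270 * x1^3 * x2 * x4^4
      + 5169 * x1^3 * x2^2 * x3 * x4^2 + 6572 * x1^3 * x2^2 * x3^2 * x4
      + 2676 * x1^3 * x2^2 * x3^3 + 1286 * x1^3 * x2^2 * x4^3 + 5244 * x1^3 * x2^3 * x3 * x4
      + 3093 * x1^3 * x2^3 * x3^2 + 2160 * x1^3 * x2^3 * x4^2 + 1766 * x1^3 * x2^4 * x3
      + 1542 * x1^3 * x2^4 * x4 + 398 * x1^3 * x2^5 + 135 * x1^3 * x3 * x4^4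
      + 614 * x1^3 * x3^2 * x4^3 + 1019 * x1^3 * x3^3 * x4^2 + 736 * x1^3 * x3^4 * x4
      + 196 * x1^3 * x3^5 + 1931 * x1^4 * x2 * x3 * x4^2 + 2502 * x1^4 * x2 * x3^2 * x4
      + 1035 * x1^4 * x2 * x3^3 + 464 * x1^4 * x2 * x4^3 + 3050 * x1^4 * x2^2 * x3 * x4
      + 1831 * x1^4 * x2^2 * x3^2 + 1235 * x1^4 * x2^2 * x4^2 + 1417 * x1^4 * x2^3 * x3
      + 1210 * x1^4 * x2^3 * x4 + 406 * x1^4 * x2^4 + 298 * x1^4 * x3 * x4^3
      + 712 * x1^4 * x3^2 * x4^2 + 662 * x1^4 * x3^3 * x4 + 215 * x1^4 * x3^4 + 33 * x1^4 * x4^4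
      + 288 * x1^5 * x2 * x3 * x4 + 174 * x1^5 * x2 * x3^2 + 114 * x1^5 * x2 * x4^2
      + 204 * x1^5 * x2^2 * x3 + 174 * x1^5 * x2^2 * x4 + 78 * x1^5 * x2^3
      + 84 * x1^5 * x3 * x4^2 + 114 * x1^5 * x3^2 * x4 + 48 * x1^5 * x3^3 + 18 * x1^5 * x4^3
      + 36 * x1^3 * x2 * x3 * x4^4 + 182 * x1^3 * x2 * x3^2 * x4^3
      + 324 * x1^3 * x2 * x3^3 * x4^2 + 246 * x1^3 * x2 * x3^4 * x4 + 68 * x1^3 * x2 * x3^5
      + 270 * x1^3 * x2^2 * x3 * x4^3 + 636 * x1^3 * x2^2 * x3^2 * x4^2
      + 600 * x1^3 * x2^2 * x3^3 * x4 + 198 * x1^3 * x2^2 * x3^4 + 36 * x1^3 * x2^2 * x4^4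
      + 558 * x1^3 * x2^3 * x3 * x4^2 + 738 * x1^3 * x2^3 * x3^2 * x4 + 310 * x1^3 * x2^3 * x3^3
      + 132 * x1^3 * x2^3 * x4^3 + 450 * x1^3 * x2^4 * x3 * x4 + 272 * x1^3 * x2^4 * x3^2
      + 180 * x1^3 * x2^4 * x4^2 + 126 * x1^3 * x2^5 * x3 + 108 * x1^3 * x2^5 * x4
      + 24 * x1^3 * x2^6 + 12 * x1^3 * x3^2 * x4^4 + 46 * x1^3 * x3^3 * x4^3
      + 66 * x1^3 * x3^4 * x4^2 + 42 * x1^3 * x3^5 * x4 + 10 * x1^3 * x3^6
      + 248 * x1^4 * x2 * x3 * x4^3 + 537 * x1^4 * x2 * x3^2 * x4^2
      + 482 * x1^4 * x2 * x3^3 * x4 + 155 * x1^4 * x2 * x3^4 + 38 * x1^4 * x2 * x4^4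
      + 690 * x1^4 * x2^2 * x3 * x4^2 + 885 * x1^4 * x2^2 * x3^2 * x4 + 367 * x1^4 * x2^2 * x3^3
      + 172 * x1^4 * x2^2 * x4^3 + 712 * x1^4 * x2^3 * x3 * x4 + 431 * x1^4 * x2^3 * x3^2
      + 288 * x1^4 * x2^3 * x4^2 + 251 * x1^4 * x2^4 * x3 + 212 * x1^4 * x2^4 * x4
      + 58 * x1^4 * x2^5 + 19 * x1^4 * x3 * x4^4 + 83 * x1^4 * x3^2 * x4^3
      + 135 * x1^4 * x3^3 * x4^2 + 97 * x1^4 * x3^4 * x4 + 26 * x1^4 * x3^5
      + 105 * x1^5 * x2 * x3 * x4^2 + 132 * x1^5 * x2 * x3^2 * x4 + 53 * x1^5 * x2 * x3^3
      + 26 * x1^5 * x2 * x4^3 + 159 * x1^5 * x2^2 * x3 * x4 + 93 * x1^5 * x2^2 * x3^2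
      + 66 * x1^5 * x2^2 * x4^2 + 71 * x1^5 * x2^3 * x3 + 62 * x1^5 * x2^3 * x4
      + 20 * x1^5 * x2^4 + 17 * x1^5 * x3 * x4^3 + 39 * x1^5 * x3^2 * x4^2
      + 35 * x1^5 * x3^3 * x4 + 11 * x1^5 * x3^4 + 2 * x1^5 * x4^4
      + 3 * x1^4 * x2 * x3 * x4^4 + 16 * x1^4 * x2 * x3^2 * x4^3 + 30 * x1^4 * x2 * x3^3 * x4^2
      + 24 * x1^4 * x2 * x3^4 * x4 + 7 * x1^4 * x2 * x3^5 + 24 * x1^4 * x2^2 * x3 * x4^3
      + 60 * x1^4 * x2^2 * x3^2 * x4^2 + 60 * x1^4 * x2^2 * x3^3 * x4 + 21 * x1^4 * x2^2 * x3^4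
      + 3 * x1^4 * x2^2 * x4^4 + 54 * x1^4 * x2^3 * x3 * x4^2 + 76 * x1^4 * x2^3 * x3^2 * x4
      + 34 * x1^4 * x2^3 * x3^3 + 12 * x1^4 * x2^3 * x4^3 + 48 * x1^4 * x2^4 * x3 * x4
      + 31 * x1^4 * x2^4 * x3^2 + 18 * x1^4 * x2^4 * x4^2 + 15 * x1^4 * x2^5 * x3
      + 12 * x1^4 * x2^5 * x4 + 3 * x1^4 * x2^6 + x1^4 * x3^2 * x4^4 + 4 * x1^4 * x3^3 * x4^3
      + 6 * x1^4 * x3^4 * x4^2 + 4 * x1^4 * x3^5 * x4 + x1^4 * x3^6 + 12 * x1^5 * x2 * x3 * x4^3
      + 24 * x1^5 * x2 * x3^2 * x4^2 + 20 * x1^5 * x2 * x3^3 * x4 + 6 * x1^5 * x2 * x3^4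
      + 2 * x1^5 * x2 * x4^4 + 30 * x1^5 * x2^2 * x3 * x4^2 + 36 * x1^5 * x2^2 * x3^2 * x4
      + 14 * x1^5 * x2^2 * x3^3 + 8 * x1^5 * x2^2 * x4^3 + 28 * x1^5 * x2^3 * x3 * x4
      + 16 * x1^5 * x2^3 * x3^2 + 12 * x1^5 * x2^3 * x4^2 + 9 * x1^5 * x2^4 * x3
      + 8 * x1^5 * x2^4 * x4 + 2 * x1^5 * x2^5 + x1^5 * x3 * x4^4 + 4 * x1^5 * x3^2 * x4^3
      + 6 * x1^5 * x3^3 * x4^2 + 4 * x1^5 * x3^4 * x4 + x1^5 * x3^5))"
    unfolding assms a_def b_def
    by (simp only: of_nat_add of_nat_mult of_nat_power of_nat_numeral of_nat_1) algebra
  have "0 < ?N - ?D"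
    unfolding excess of_nat_0_less_iff by (rule add_pos_nonneg[OF zero_less_numeral zero_le])
  then show ?thesis
    by (rule diff_gt_0_iff_gt[THEN iffD1])
qed

lemma extremal_product_gt_one_ordered:
  fixes t u p K :: int
  assumes "3 \<le> t" "2 \<le> u" "u \<le> p" "p < K"
  shows "1 < extremal_product t u p K"
proof -
  obtain x1 x2 x3 x4 :: nat where x: "t = int x1 + 3" "u = int x2 + 2" "p = int x2 + int x3 + 2"
    "K = int x2 + int x3 + int x4 + 3"
    using assms by (intro that[of "nat (t - 3)" "nat (u - 2)" "nat (p - u)" "nat (K - p - 1)"]) auto
  define a b where "a = t * K - t + 1 - p" and "b = t * K - t + 1 - u"
  have "3 * (K - 1) \<le> t * (K - 1)"
    using assms by (intro mult_right_mono) auto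
  then have "0 < a" "0 < b"
    using assms unfolding a_def b_def by (auto simp: algebra_simps)
  then have den_pos: "0 < (a + (K - u)) * ((t + u) * a + (t + u) + p * (K - u))
      * ((b + (K - p)) * ((t + p) * b + (t + p) + u * (K - p)))"
    using assms by (intro mult_pos_pos add_pos_pos) auto
  have "extremal_product t u p K
      = real_of_int (a * ((t + u + p) * a + (t + u) + p * (K - u))
          * (b * ((t + p + u) * b + (t + p) + u * (K - p))))
        / real_of_int ((a + (K - u)) * ((t + u) * a + (t + u) + p * (K - u))
          * ((b + (K - p)) * ((t + p) * b + (t + p) + u * (K - p))))"
    unfolding extremal_product_def ratio_factor_def a_def b_def
    by (simp only: of_int_mult times_divide_times_eq)
  also have "1 < \<dots>"
    using extremal_cross_multiplied[OF x] den_pos unfolding a_def b_def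
    by (simp only: of_int_less_iff less_divide_eq_1_pos of_int_0_less_iff)
  finally show ?thesis .
qed

lemma extremal_product_gt_one:
  fixes t u p K :: int
  assumes "3 \<le> t" "2 \<le> u" "2 \<le> p" "u < K" "p < K"
  shows "1 < extremal_product t u p K"
proof (cases "u \<le> p")
  case True
  then show ?thesis
    using assms extremal_product_gt_one_ordered by simp
next
  case False
  then show ?thesis
    using assms extremal_product_gt_one_ordered[of t p u K] by (simp add: extremal_product_commute)
qed

theorem lemma3p1:
  fixes n m k l s t i :: int
  assumes "n > 0" "m > 0" "k > 0" "l > 0" "s > 0" "t > 0" "i > 0"
    and "min m n \<ge> (t + 1) * (k - t + 1)"
    and "k \<ge> l" "l > t" "t \<ge> 3"
    and "i + 2 \<le> s" "s \<le> i + k - t"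
    and "t + 2 \<le> i" "i \<le> k"
  shows "real_of_int ((m - l + t - i) * (n - s - k + i) * S n s i k * S m s (s + t - i) l)
       / real_of_int ((m - s + 1) * (n - s + 1) * T n s i k * T m s (s + t - i) l) > 1"
proof -
  define K u p where "K = k - t + 1" and "u = i - t" and "p = s - i"
  define a b where "a = n - s - k + i" and "b = m - l + t - i"
  define a0 b0 where "a0 = t * K - t + 1 - p" and "b0 = t * K - t + 1 - u"
  have "3 * (K - 1) \<le> t * (K - 1)"
    using assms unfolding K_def by (intro mult_right_mono) auto
  then have "3 * K - 3 \<le> t * K - t"
    by (simp add: algebra_simps)
  moreover have "t * K + K \<le> n" "t * K + K \<le> m"
    using assms(8) unfolding K_def by (simp_all add: algebra_simps)
  ultimately have bounds: "0 < a0" "a0 \<le> a" "u < b0" "b0 \<le> b" "0 < m - s + 1"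
    using assms K_def u_def p_def a_def b_def a0_def b0_def by linarith+
  have T_left_pos: "0 < i * a + i + p * (k - i + 1)"
    using bounds assms p_def by (intro add_pos_nonneg add_pos_pos mult_pos_pos mult_nonneg_nonneg) auto
  have "0 < (s + t - i) * (b + 1 - u) + u * (l + 1)"
    using bounds assms u_def by (intro add_pos_pos mult_pos_pos) auto
  then have T_right_pos: "0 < (s + t - i) * b + (s + t - i) + u * (l - (s + t - i) + 1)"
    by (simp add: algebra_simps)
  have "1 < extremal_product t u p K"
    using assms unfolding K_def u_def p_def by (intro extremal_product_gt_one) auto
  also have "extremal_product t u p K
      = ratio_factor a0 i p (k - i + 1) * ratio_factor b0 (s + t - i) u (K - p)"
    unfolding extremal_product_def a0_def b0_def K_def u_def p_def by (simp add: algebra_simps)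
  also have "\<dots> \<le> ratio_factor a i p (k - i + 1) * ratio_factor b (s + t - i) u (l - (s + t - i) + 1)"
    using bounds T_left_pos T_right_pos assms u_def p_def K_def b_def
    by (intro mult_mono ratio_factor_le ratio_factor_nonneg) auto
  also have "\<dots> = real_of_int ((m - l + t - i) * (n - s - k + i) * S n s i k * S m s (s + t - i) l)
       / real_of_int ((m - s + 1) * (n - s + 1) * T n s i k * T m s (s + t - i) l)"
    unfolding S_T_product_ratio_eq a_def b_def p_def u_def by simp
  finally show ?thesis .
qed

end
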